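(* (a) For every $n\ge 1$, \[ \sigma(n)+\sigma_o(n)+2\sum_{k=1}^{n-1}(-1)^k\delta_s(k)\bigl(\sigma(n-k)+\sigma_o(n-k)\bigr)=2(-1)^{n+1}n\,\delta_s(n). \] (b) For every $n\ge 1$, \[ \sum_{k=1}^{n}\bigl(\sigma_o(k)-\sigma_e(k)\bigr)\delta_t(n-k)=n\,\delta_t(n). \] (c) For every $n\ge 2$, \[ \sigma(n)+\sigma_s(n)+2\sum_{k=1}^{n-1}(-1)^k\delta_s(k)\bigl(\sigma(n-k)+\sigma_s(n-k)\bigr)=2(-1)^{n+1}n\,\delta_s(n). \]
   Context: $\sigma(n)$ is the sum of the positive divisors of $n$, $\sigma_o(n)$ the sum of the odd positive divisors of $n$, $\sigma_e(n)$ the sum of the even positive divisors of $n$, and $\sigma_s(n)=\sum_{d\mid n}(-1)^{d-1}\frac{n}{d}$. For $n\ge1$, $\delta_s(n)=1$ if $n$ is a perfect square and $0$ otherwise. For $n\ge0$, $\delta_t(n)=1$ if $n=\frac{m(m+1)}{2}$ for some integer $m\ge0$ (so $\delta_t(0)=1$), and $0$ otherwise. *)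

theory Defs
  imports Main
begin

definition sigma :: "nat \<Rightarrow> int" where
  "sigma n = (\<Sum>d\<in>{d. d dvd n}. int d)"

definition sigma_o :: "nat \<Rightarrow> int" where
  "sigma_o n = (\<Sum>d\<in>{d. d dvd n \<and> odd d}. int d)"

definition sigma_e :: "nat \<Rightarrow> int" where
  "sigma_e n = (\<Sum>d\<in>{d. d dvd n \<and> even d}. int d)"

definition sigma_s :: "nat \<Rightarrow> int" where
  "sigma_s n = (\<Sum>d\<in>{d. d dvd n}. (-1) ^ (d - 1) * int (n div d))"

definition delta_s :: "nat \<Rightarrow> int" where
  "delta_s n = (if \<exists>m. n = m ^ 2 then 1 else 0)"

definition delta_t :: "nat \<Rightarrow> int" where
  "delta_t n = (if \<exists>m. n = m * (m + 1) div 2 then 1 else 0)"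

end

theory Submission
  imports Defs "HOL-Computational_Algebra.Formal_Power_Series"
begin

(* Both (a) and (b) come from product formulas of Gauss,
     \<Sum>m\<in>\<int>. (-1)^m q^(m^2) = \<Prod>k\<ge>1. (1 - q^(2k)) (1 - q^(2k-1))^2   and
     (\<Sum>m\<ge>0. q^(m(m+1)/2)) (q;q)_\<infinity> = (q^2;q^2)_\<infinity>^2,
   by logarithmic differentiation: the Euler operator q d/dq maps \<Prod>(1 - q^d) to
   -\<Prod>(1 - q^d) \<Sum> d q^d/(1 - q^d), a Lambert series whose coefficients are divisor sums.
   Modulo q^n both product formulas are exact consequences of finite forms of Jacobi's triple
   product, which are instances of Cauchy's q-binomial theorem: the Gaussian binomial [2n,k]_q
   times (q;q)_n is 1 modulo q^(min(k, 2n-k)+1). Part (c) is part (a) because sigma_s = sigma_o. *)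

unbundle fps_syntax

lemma fps_cutoff_mult_cong:
  assumes "fps_cutoff n f = fps_cutoff n f'" "fps_cutoff n g = fps_cutoff n g'"
  shows "fps_cutoff n (f * g) = fps_cutoff n (f' * g')"
  using assms unfolding fps_cutoff_eq_fps_cutoff_iff fps_mult_nth
  by (auto intro!: sum.cong)

lemma fps_cutoff_add_cong:
  "fps_cutoff n f = fps_cutoff n f' \<Longrightarrow> fps_cutoff n g = fps_cutoff n g' \<Longrightarrow>
   fps_cutoff n (f + g) = fps_cutoff n (f' + g')"
  by (simp add: fps_cutoff_eq_fps_cutoff_iff)

lemma fps_cutoff_sum_cong:
  "(\<And>x. x \<in> A \<Longrightarrow> fps_cutoff n (f x) = fps_cutoff n (g x)) \<Longrightarrow>
   fps_cutoff n (sum f A) = fps_cutoff n (sum g A)"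
  by (simp add: fps_cutoff_eq_fps_cutoff_iff fps_sum_nth)

lemma fps_cutoff_mono:
  "fps_cutoff n f = fps_cutoff n g \<Longrightarrow> m \<le> n \<Longrightarrow> fps_cutoff m f = fps_cutoff m g"
  by (simp add: fps_cutoff_eq_fps_cutoff_iff)

lemma fps_cutoff_X_power_mult_cong:
  "fps_cutoff n f = fps_cutoff n g \<Longrightarrow>
   fps_cutoff (w + n) (fps_X ^ w * f) = fps_cutoff (w + n) (fps_X ^ w * g)"
  by (auto simp: fps_cutoff_eq_fps_cutoff_iff fps_X_power_mult_nth)

lemma fps_cutoff_one_minus_X_power:
  "n \<le> w \<Longrightarrow> fps_cutoff n (1 - fps_X ^ w :: 'a::comm_ring_1 fps) = fps_cutoff n 1"
  by (auto simp: fps_cutoff_eq_fps_cutoff_iff)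

lemma fps_cutoff_mult_cancel:
  fixes f g h :: "'a::comm_ring_1 fps"
  assumes "fps_cutoff n (f * h) = fps_cutoff n (g * h)" "h $ 0 = 1"
  shows "fps_cutoff n f = fps_cutoff n g"
proof -
  have inv: "h * fps_right_inverse h 1 = 1"
    by (rule fps_right_inverse) (simp add: assms(2))
  have "fps_cutoff n (f * h * fps_right_inverse h 1) = fps_cutoff n (g * h * fps_right_inverse h 1)"
    by (rule fps_cutoff_mult_cong[OF assms(1) refl])
  then show ?thesis by (simp add: mult.assoc inv)
qed

lemma fps_cutoff_double_cancel:
  "fps_cutoff n (2 * f) = fps_cutoff n (2 * g) \<Longrightarrow> fps_cutoff n f = fps_cutoff n (g :: int fps)"
  by (simp add: fps_cutoff_eq_fps_cutoff_iff numeral_fps_const)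

lemma fps_eq_if_cutoffs_eq:
  assumes "\<And>N. fps_cutoff N f = fps_cutoff N g"
  shows "f = g"
proof (rule fps_ext)
  fix n
  show "f $ n = g $ n"
    using assms[of "Suc n"] by (simp add: fps_cutoff_eq_fps_cutoff_iff)
qed

lemma fps_X_power_mult_left_cancel:
  assumes "fps_X ^ c * f = fps_X ^ c * g"
  shows "f = g"
proof (rule fps_ext)
  fix i
  have "(fps_X ^ c * f) $ (i + c) = (fps_X ^ c * g) $ (i + c)"
    by (simp only: assms)
  then show "f $ i = g $ i"
    by (simp add: fps_X_power_mult_nth)
qed

lemma fps_neg_one_power_mult_nth: "((-1) ^ k * f :: 'a::comm_ring_1 fps) $ i = (-1) ^ k * f $ i"
  by (induction k) (simp_all add: mult.assoc)

section \<open>The Euler operator and Lambert series\<close>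

definition fps_XD :: "'a::comm_ring_1 fps \<Rightarrow> 'a fps" where
  "fps_XD f = fps_X * fps_deriv f"

lemma fps_XD_nth [simp]: "fps_XD f $ n = of_nat n * f $ n"
  by (cases n) (simp_all add: fps_XD_def)

lemma fps_XD_mult: "fps_XD (f * g) = fps_XD f * g + f * fps_XD g"
  by (simp add: fps_XD_def algebra_simps)

lemma fps_cutoff_XD_cong:
  "fps_cutoff n f = fps_cutoff n g \<Longrightarrow> fps_cutoff n (fps_XD f) = fps_cutoff n (fps_XD g)"
  by (simp add: fps_cutoff_eq_fps_cutoff_iff)

lemma fps_XD_mult_log:
  assumes "fps_XD f = - (f * a)" "fps_XD g = - (g * b)"
  shows "fps_XD (f * g) = - (f * g * (a + b))"
  by (simp add: fps_XD_mult assms algebra_simps)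

definition fps_multiples :: "nat \<Rightarrow> 'a::comm_ring_1 fps" where
  "fps_multiples m = Abs_fps (\<lambda>i. if 0 < i \<and> m dvd i then 1 else 0)"

lemma fps_multiples_nth: "fps_multiples m $ i = (if 0 < i \<and> m dvd i then 1 else 0)"
  by (simp add: fps_multiples_def)

lemma one_minus_X_power_mult_multiples:
  assumes "0 < m"
  shows "(1 - fps_X ^ m) * fps_multiples m = (fps_X ^ m :: 'a::comm_ring_1 fps)"
proof (rule fps_ext)
  fix i
  have "((1 - fps_X ^ m) * fps_multiples m) $ i = fps_multiples m $ i - (fps_X ^ m * fps_multiples m) $ i"
    by (simp add: left_diff_distrib)
  also have "\<dots> = (fps_X ^ m :: 'a fps) $ i"
  proof (cases "i < m")
    case True
    then show ?thesis
      using dvd_imp_le[of m i] by (auto simp: fps_X_power_mult_nth fps_multiples_nth)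
  next
    case False
    then have "m dvd i \<longleftrightarrow> m dvd (i - m)"
      by (simp add: dvd_minus_self)
    then show ?thesis
      using False assms by (auto simp: fps_X_power_mult_nth fps_multiples_nth)
  qed
  finally show "((1 - fps_X ^ m) * fps_multiples m) $ i = (fps_X ^ m :: 'a fps) $ i" .
qed

lemma fps_XD_one_minus_X_power:
  assumes "0 < m"
  shows "fps_XD (1 - fps_X ^ m :: 'a::comm_ring_1 fps) =
    - ((1 - fps_X ^ m) * (of_nat m * fps_multiples m))"
proof -
  have "fps_XD (1 - fps_X ^ m :: 'a fps) = - (of_nat m * fps_X ^ m)"
    by (rule fps_ext) auto
  then show ?thesis
    using one_minus_X_power_mult_multiples[OF assms] by (metis mult.left_commute)
qed

definition lambert_sum :: "(nat \<Rightarrow> nat) \<Rightarrow> nat \<Rightarrow> 'a::comm_ring_1 fps" where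
  "lambert_sum g N = (\<Sum>i<N. of_nat (g i) * fps_multiples (g i))"

lemma fps_XD_prod_one_minus_X_power:
  assumes "\<And>i. 0 < g i"
  shows "fps_XD (\<Prod>i<N. 1 - fps_X ^ g i) = - ((\<Prod>i<N. 1 - fps_X ^ g i) * lambert_sum g N)"
proof (induction N)
  case 0
  then show ?case
    by (simp add: fps_XD_def lambert_sum_def)
next
  case (Suc N)
  then show ?case
    using fps_XD_mult_log[OF Suc fps_XD_one_minus_X_power[OF assms]]
    by (simp add: lambert_sum_def)
qed

lemma lambert_sum_nth:
  assumes "0 < j"
  shows "lambert_sum g N $ j = (\<Sum>i | i < N \<and> g i dvd j. of_nat (g i))"
proof -
  have "lambert_sum g N $ j = (\<Sum>i<N. if g i dvd j then of_nat (g i) else 0)"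
    using assms by (simp add: lambert_sum_def fps_sum_nth fps_multiples_nth if_distrib cong: if_cong)
  also have "\<dots> = (\<Sum>i\<in>{i\<in>{..<N}. g i dvd j}. of_nat (g i))"
    by (rule sum.inter_filter[symmetric]) simp
  also have "{i\<in>{..<N}. g i dvd j} = {i. i < N \<and> g i dvd j}"
    by auto
  finally show ?thesis .
qed

lemma lambert_sum_nth_0 [simp]: "lambert_sum g N $ 0 = 0"
  by (simp add: lambert_sum_def fps_sum_nth fps_multiples_nth)

lemma fps_XD_eq_mult_if_product_cutoffs:
  fixes f c :: "'a::comm_ring_1 fps" and A B a b :: "nat \<Rightarrow> 'a fps"
  assumes prod: "\<And>N. fps_cutoff N (f * A N) = fps_cutoff N (B N)"
    and A: "\<And>N. fps_XD (A N) = - (A N * a N)" and A_0: "\<And>N. A N $ 0 = 1"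
    and B: "\<And>N. fps_XD (B N) = - (B N * b N)"
    and c: "\<And>N. fps_cutoff N (a N - b N) = fps_cutoff N c"
  shows "fps_XD f = f * c"
proof (rule fps_eq_if_cutoffs_eq)
  fix N
  have "fps_XD f * A N = fps_XD (f * A N) + f * A N * a N"
    by (simp add: fps_XD_mult A algebra_simps)
  then have "fps_cutoff N (fps_XD f * A N) = fps_cutoff N (fps_XD (B N) + B N * a N)"
    using fps_cutoff_add_cong[OF fps_cutoff_XD_cong[OF prod] fps_cutoff_mult_cong[OF prod refl]]
    by simp
  also have "fps_XD (B N) + B N * a N = B N * (a N - b N)"
    by (simp add: B algebra_simps)
  also have "fps_cutoff N (B N * (a N - b N)) = fps_cutoff N (f * A N * c)"
    by (rule fps_cutoff_mult_cong[OF prod[symmetric] c])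
  also have "f * A N * c = f * c * A N"
    by (simp add: mult_ac)
  finally show "fps_cutoff N (fps_XD f) = fps_cutoff N (f * c)"
    by (rule fps_cutoff_mult_cancel) (rule A_0)
qed

lemma lambert_sum_nth_eq_divisor_sum:
  assumes "inj g" "0 < j" "\<And>d. d dvd j \<Longrightarrow> P d \<Longrightarrow> \<exists>i<N. d = g i" "\<And>i. P (g i)"
  shows "lambert_sum g N $ j = (\<Sum>d | d dvd j \<and> P d. of_nat d)"
proof -
  have "{d. d dvd j \<and> P d} = g ` {i. i < N \<and> g i dvd j}"
    using assms(3,4) by blast
  then have "(\<Sum>d | d dvd j \<and> P d. of_nat d) = (\<Sum>i | i < N \<and> g i dvd j. of_nat (g i) :: 'a)"
    using sum.reindex[OF inj_on_subset[OF assms(1)], of _ of_nat] by simp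
  then show ?thesis
    using lambert_sum_nth[OF assms(2), of g N] by simp
qed

lemma lambert_sum_odd_nth:
  assumes "0 < j" "j \<le> N"
  shows "lambert_sum (\<lambda>i. 2 * i + 1) N $ j = sigma_o j"
  unfolding sigma_o_def
proof (rule lambert_sum_nth_eq_divisor_sum)
  fix d
  assume "d dvd j" "odd d"
  then have "d div 2 < N" "d = 2 * (d div 2) + 1"
    using dvd_imp_le[of d j] assms by auto
  then show "\<exists>i<N. d = 2 * i + 1"
    by blast
qed (use assms in \<open>auto simp: inj_def\<close>)

lemma lambert_sum_multiples_nth:
  assumes "0 < e" "0 < j" "j \<le> N"
  shows "lambert_sum (\<lambda>i. e * Suc i) N $ j = (\<Sum>d | d dvd j \<and> e dvd d. of_nat d)"
proof (rule lambert_sum_nth_eq_divisor_sum)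
  fix d
  assume "d dvd j" "e dvd d"
  then obtain k where k: "d = e * k"
    by blast
  with \<open>d dvd j\<close> assms have "0 < k" "e * k \<le> N"
    using dvd_imp_le[of d j] by auto
  moreover have "k \<le> e * k"
    using assms(1) by simp
  ultimately have "0 < k" "k \<le> N"
    by linarith+
  then show "\<exists>i<N. d = e * Suc i"
    using k by (intro exI[of _ "k - 1"]) auto
qed (use assms in \<open>auto simp: inj_def\<close>)

lemma sigma_eq_sigma_o_plus_sigma_e: "0 < j \<Longrightarrow> sigma j = sigma_o j + sigma_e j"
  unfolding sigma_def sigma_o_def sigma_e_def
  by (subst sum.union_disjoint[symmetric]) (auto intro: arg_cong2[where f = sum])

lemma sigma_s_eq_sum_cofactor:
  assumes "0 < n"
  shows "sigma_s n = (\<Sum>e | e dvd n. (-1) ^ (n div e - 1) * int e)"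
  unfolding sigma_s_def
  by (rule sum.reindex_bij_witness[where i = "\<lambda>d. n div d" and j = "\<lambda>d. n div d"])
     (use assms in \<open>auto elim!: dvdE\<close>)

lemma sigma_e_eq_sum_cofactor:
  assumes "0 < n"
  shows "sigma_e n = (\<Sum>e | e dvd n \<and> even (n div e). 2 * int e)"
  unfolding sigma_e_def
  by (rule sum.reindex_bij_witness[where i = "\<lambda>d. 2 * d" and j = "\<lambda>d. d div 2"])
     (use assms in \<open>auto elim!: dvdE evenE\<close>)

lemma sigma_s_eq_sigma_o:
  assumes "0 < n"
  shows "sigma_s n = sigma_o n"
proof -
  have fin: "finite {e. e dvd n}"
    using assms by simp
  have "sigma_s n = (\<Sum>e | e dvd n. int e - (if even (n div e) then 2 * int e else 0))"
    unfolding sigma_s_eq_sum_cofactor[OF assms]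
  proof (rule sum.cong[OF refl])
    fix e
    assume "e \<in> {e. e dvd n}"
    then have "0 < n div e"
      using assms by (auto elim!: dvdE)
    then show "(-1) ^ (n div e - 1) * int e = int e - (if even (n div e) then 2 * int e else 0)"
      by (cases "n div e") auto
  qed
  also have "\<dots> = sigma n - sigma_e n"
    unfolding sum_subtractf sigma_def sigma_e_eq_sum_cofactor[OF assms]
    by (simp add: sum.inter_filter[OF fin, symmetric] conj_commute)
  finally show ?thesis
    using sigma_eq_sigma_o_plus_sigma_e[OF assms] by simp
qed

section \<open>Gaussian binomial coefficients\<close>

lemma Suc_choose_two: "Suc k choose 2 = (k choose 2) + k"
  by (simp add: numeral_2_eq_2)

lemma int_choose_two: "2 * int (k choose 2) = int k * (int k - 1)"
  by (induction k) (auto simp: Suc_choose_two algebra_simps)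

fun qbinomial :: "'a::comm_ring_1 \<Rightarrow> nat \<Rightarrow> nat \<Rightarrow> 'a" where
  "qbinomial p m 0 = 1"
| "qbinomial p 0 (Suc k) = 0"
| "qbinomial p (Suc m) (Suc k) = qbinomial p m k + p ^ Suc k * qbinomial p m (Suc k)"

lemma qbinomial_eq_0: "m < k \<Longrightarrow> qbinomial p m k = 0"
  by (induction p m k rule: qbinomial.induct) auto

theorem qbinomial_theorem:
  "(\<Prod>t<m. a + b * p ^ t) = (\<Sum>k\<le>m. qbinomial p m k * p ^ (k choose 2) * b ^ k * a ^ (m - k))"
proof (induction m arbitrary: b)
  case 0
  then show ?case by (simp add: binomial_eq_0)
next
  case (Suc m)
  define c where "c k = p ^ (k choose 2) * b ^ k * a ^ (Suc m - k)" for k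
  define S where "S = (\<Sum>k\<le>m. qbinomial p m k * p ^ (k choose 2) * (b * p) ^ k * a ^ (m - k))"
  have "(\<Sum>k\<le>Suc m. qbinomial p (Suc m) k * p ^ (k choose 2) * b ^ k * a ^ (Suc m - k))
      = c 0 + (\<Sum>k\<le>m. qbinomial p (Suc m) (Suc k) * c (Suc k))"
    by (simp only: sum.atMost_Suc_shift qbinomial.simps(1) c_def mult.assoc mult_1_left)
  also have "\<dots> = (\<Sum>k\<le>m. qbinomial p m k * c (Suc k))
      + (c 0 + (\<Sum>k\<le>m. p ^ Suc k * qbinomial p m (Suc k) * c (Suc k)))"
    by (simp add: sum.distrib algebra_simps)
  also have "c 0 + (\<Sum>k\<le>m. p ^ Suc k * qbinomial p m (Suc k) * c (Suc k))
      = (\<Sum>k\<le>Suc m. p ^ k * qbinomial p m k * c k)"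
    by (simp only: sum.atMost_Suc_shift[of _ m] qbinomial.simps(1) power_0 mult_1_left)
  also have "\<dots> = (\<Sum>k\<le>m. p ^ k * qbinomial p m k * c k)"
    by (simp add: qbinomial_eq_0)
  also have "(\<Sum>k\<le>m. qbinomial p m k * c (Suc k)) = b * S"
    by (simp add: S_def c_def sum_distrib_left Suc_choose_two power_mult_distrib power_add algebra_simps)
  also have "(\<Sum>k\<le>m. p ^ k * qbinomial p m k * c k) = a * S"
    unfolding S_def c_def sum_distrib_left
    by (rule sum.cong) (auto simp: power_mult_distrib Suc_diff_le algebra_simps)
  also have "b * S + a * S = (a + b) * (\<Prod>t<m. a + (b * p) * p ^ t)"
    unfolding S_def Suc.IH[of "b * p"] by (simp add: algebra_simps)
  also have "\<dots> = (\<Prod>t<Suc m. a + b * p ^ t)"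
    by (simp only: prod.lessThan_Suc_shift) (simp add: mult.assoc)
  finally show ?case ..
qed

definition qpochhammer :: "'a::comm_ring_1 \<Rightarrow> nat \<Rightarrow> 'a" where
  "qpochhammer p n = (\<Prod>i<n. 1 - p ^ Suc i)"

lemma qpochhammer_0 [simp]: "qpochhammer p 0 = 1"
  by (simp add: qpochhammer_def)

lemma qpochhammer_Suc: "qpochhammer p (Suc n) = qpochhammer p n * (1 - p ^ Suc n)"
  by (simp add: qpochhammer_def)

lemma qbinomial_mult_qpochhammer:
  "k \<le> m \<Longrightarrow> qbinomial p m k * qpochhammer p k * qpochhammer p (m - k) = qpochhammer p m"
proof (induction m arbitrary: k)
  case 0
  then show ?case by simp
next
  case (Suc m)
  show ?case
  proof (cases k)
    case 0
    then show ?thesis by simp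
  next
    case (Suc j)
    with Suc.prems have "j \<le> m" by simp
    have first: "qbinomial p m j * qpochhammer p (Suc j) * qpochhammer p (m - j)
        = qpochhammer p m * (1 - p ^ Suc j)"
      using Suc.IH[OF \<open>j \<le> m\<close>] by (simp add: qpochhammer_Suc algebra_simps)
    have second: "p ^ Suc j * qbinomial p m (Suc j) * qpochhammer p (Suc j) * qpochhammer p (m - j)
        = p ^ Suc j * qpochhammer p m * (1 - p ^ (m - j))"
    proof (cases "j = m")
      case True
      then show ?thesis by (simp add: qbinomial_eq_0)
    next
      case False
      with \<open>j \<le> m\<close> have "Suc j \<le> m" by simp
      then have "qpochhammer p (m - j) = qpochhammer p (m - Suc j) * (1 - p ^ (m - j))"
        by (metis Suc_diff_Suc Suc_le_lessD qpochhammer_Suc)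
      then have "p ^ Suc j * qbinomial p m (Suc j) * qpochhammer p (Suc j) * qpochhammer p (m - j)
          = p ^ Suc j * (qbinomial p m (Suc j) * qpochhammer p (Suc j) * qpochhammer p (m - Suc j))
            * (1 - p ^ (m - j))"
        by (simp only: mult_ac)
      then show ?thesis
        using Suc.IH[OF \<open>Suc j \<le> m\<close>] by simp
    qed
    have "Suc j + (m - j) = Suc m"
      using \<open>j \<le> m\<close> by simp
    then have pow: "p ^ Suc j * p ^ (m - j) = p ^ Suc m"
      by (metis power_add)
    have "qbinomial p (Suc m) k * qpochhammer p k * qpochhammer p (Suc m - k)
        = qbinomial p m j * qpochhammer p (Suc j) * qpochhammer p (m - j)
          + p ^ Suc j * qbinomial p m (Suc j) * qpochhammer p (Suc j) * qpochhammer p (m - j)"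
      using Suc by (simp add: algebra_simps)
    also have "\<dots> = qpochhammer p m - qpochhammer p m * (p ^ Suc j * p ^ (m - j))"
      unfolding first second by (simp add: algebra_simps)
    also have "\<dots> = qpochhammer p (Suc m)"
      by (simp only: pow qpochhammer_Suc right_diff_distrib mult_1_right)
    finally show ?thesis .
  qed
qed

definition neg_qpochhammer :: "'a::comm_ring_1 \<Rightarrow> nat \<Rightarrow> 'a" where
  "neg_qpochhammer p n = (\<Prod>i<n. 1 + p ^ Suc i)"

lemma neg_qpochhammer_mult_qpochhammer:
  "neg_qpochhammer p n * qpochhammer p n = qpochhammer (p ^ 2) n"
  unfolding neg_qpochhammer_def qpochhammer_def prod.distrib[symmetric]
  by (rule prod.cong) (simp_all add: power2_eq_square power_mult_distrib algebra_simps)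

lemma fps_XD_qpochhammer_X_power:
  assumes "0 < e"
  shows "fps_XD (qpochhammer (fps_X ^ e) N :: 'a::comm_ring_1 fps) =
    - (qpochhammer (fps_X ^ e) N * lambert_sum (\<lambda>i. e * Suc i) N)"
proof -
  have "qpochhammer (fps_X ^ e) N = (\<Prod>i<N. 1 - fps_X ^ (e * Suc i) :: 'a fps)"
    unfolding qpochhammer_def power_mult ..
  then show ?thesis
    using fps_XD_prod_one_minus_X_power[of "\<lambda>i. e * Suc i" N] assms by simp
qed

lemma qpochhammer_X_power_nth_0:
  assumes "0 < e"
  shows "qpochhammer (fps_X ^ e :: 'a::comm_ring_1 fps) n $ 0 = 1"
  by (induction n) (use assms in \<open>simp_all add: qpochhammer_Suc fps_mult_nth flip: power_mult\<close>)

lemma fps_cutoff_qpochhammer_X_power: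
  fixes e :: nat
  assumes "0 < e" "b \<le> a"
  shows "fps_cutoff (Suc b) (qpochhammer (fps_X ^ e :: 'a::comm_ring_1 fps) a) =
    fps_cutoff (Suc b) (qpochhammer (fps_X ^ e) b)"
  using assms(2)
proof (induction a rule: dec_induct)
  case base
  then show ?case ..
next
  case (step a)
  have "Suc b \<le> e * Suc a"
    using assms(1) step.hyps by (cases e) auto
  then have "fps_cutoff (Suc b) (1 - (fps_X ^ e) ^ Suc a :: 'a fps) = fps_cutoff (Suc b) 1"
    unfolding power_mult[symmetric] by (rule fps_cutoff_one_minus_X_power)
  from fps_cutoff_mult_cong[OF step.IH this] show ?case
    by (simp add: qpochhammer_Suc)
qed

lemma fps_cutoff_qbinomial_mult_qpochhammer:
  fixes e :: nat
  assumes "0 < e" "k \<le> m" "T \<le> Suc k" "T \<le> Suc (m - k)" "T \<le> Suc M"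
  shows "fps_cutoff T (qbinomial (fps_X ^ e) m k * qpochhammer (fps_X ^ e) M :: 'a::comm_ring_1 fps)
    = fps_cutoff T 1"
  \<comment> \<open>Modulo X^T all the q-Pochhammer symbols involved agree with the unit (p;p)_(T-1), so
    qbinomial_mult_qpochhammer makes the Gaussian binomial its inverse.\<close>
proof (cases T)
  case 0
  then show ?thesis by simp
next
  case (Suc t)
  define p :: "'a fps" where "p = fps_X ^ e"
  define Q where "Q = qpochhammer p t"
  have Q: "fps_cutoff T (qpochhammer p j) = fps_cutoff T Q" if "t \<le> j" for j
    unfolding Q_def p_def Suc using fps_cutoff_qpochhammer_X_power[OF assms(1) that] .
  have "fps_cutoff T (qbinomial p m k * Q * Q) =
      fps_cutoff T (qbinomial p m k * qpochhammer p k * qpochhammer p (m - k))"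
    using assms Suc by (intro fps_cutoff_mult_cong refl Q[symmetric]) auto
  also have "\<dots> = fps_cutoff T (1 * Q)"
    using Q[of m] assms Suc by (simp add: qbinomial_mult_qpochhammer)
  finally have "fps_cutoff T (qbinomial p m k * Q) = fps_cutoff T 1"
    by (rule fps_cutoff_mult_cancel) (simp add: Q_def p_def qpochhammer_X_power_nth_0 assms(1))
  moreover have "fps_cutoff T (qbinomial p m k * qpochhammer p M) = fps_cutoff T (qbinomial p m k * Q)"
    using assms Suc by (intro fps_cutoff_mult_cong refl Q) auto
  ultimately show ?thesis
    by (simp add: p_def)
qed

definition nat_dist :: "nat \<Rightarrow> nat \<Rightarrow> nat" where
  "nat_dist k n = (if k \<le> n then n - k else k - n)"

lemma int_nat_dist: "int (nat_dist k n) = \<bar>int k - int n\<bar>"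
  by (simp add: nat_dist_def)

lemma fps_cutoff_X_power_mult_qbinomial_qpochhammer:
  fixes e :: nat
  assumes "0 < e" "k \<le> 2 * n" "nat_dist k n \<le> w + 1"
  shows "fps_cutoff n (fps_X ^ w * (qbinomial (fps_X ^ e) (2 * n) k * qpochhammer (fps_X ^ e) n)) =
    fps_cutoff n (fps_X ^ w :: 'a::comm_ring_1 fps)"
proof -
  define T where "T = Suc (n - nat_dist k n)"
  have "fps_cutoff T (qbinomial (fps_X ^ e) (2 * n) k * qpochhammer (fps_X ^ e) n :: 'a fps) =
      fps_cutoff T 1"
    using assms by (intro fps_cutoff_qbinomial_mult_qpochhammer) (auto simp: T_def nat_dist_def)
  then have "fps_cutoff (w + T) (fps_X ^ w * (qbinomial (fps_X ^ e) (2 * n) k * qpochhammer (fps_X ^ e) n)) =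
      fps_cutoff (w + T) (fps_X ^ w * 1 :: 'a fps)"
    by (rule fps_cutoff_X_power_mult_cong)
  moreover have "n \<le> w + T"
    using assms by (auto simp: T_def nat_dist_def)
  ultimately show ?thesis
    by (auto intro: fps_cutoff_mono)
qed

section \<open>Gauss's identity for the signed sum of squares\<close>

lemma prod_lessThan_add: "(\<Prod>t<(m::nat) + n. f t) = (\<Prod>t<m. f t) * (\<Prod>s<n. f (m + s))"
  by (induction n) (simp_all add: mult.assoc)

lemma sum_atMost_double_split:
  fixes f :: "nat \<Rightarrow> 'a::comm_monoid_add"
  shows "(\<Sum>k\<le>2 * n. f k) = (\<Sum>r\<le>n. f (n - r)) + (\<Sum>s=1..n. f (n + s))"
proof -
  have "(\<Sum>k\<le>n. f k) = (\<Sum>r\<le>n. f (n - r))"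
    using sum.atLeastAtMost_rev[of f 0 n] by (simp add: atLeast0AtMost)
  moreover have "(\<Sum>k=Suc n..n + n. f k) = (\<Sum>s=1..n. f (n + s))"
    using sum.shift_bounds_cl_nat_ivl[of f 1 n n] by (simp add: add.commute)
  ultimately show ?thesis
    by (simp add: mult_2 sum_up_index_split)
qed

lemma gauss_exponent_identity:
  assumes "0 < n" "k \<le> 2 * n"
  shows "2 * (k choose 2) + (2 * n - 1) * (2 * n - k)
    = (2 * (n choose 2) + (2 * n - 1) * n) + nat_dist k n ^ 2"
proof -
  have "int (2 * n - 1) = 2 * int n - 1" "int (2 * n - k) = 2 * int n - int k"
    using assms by simp_all
  moreover have "int (nat_dist k n ^ 2) = (int k - int n) ^ 2"
    by (simp add: int_nat_dist)
  ultimately have "int (2 * (k choose 2) + (2 * n - 1) * (2 * n - k))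
      = int (2 * (n choose 2) + (2 * n - 1) * n + nat_dist k n ^ 2)"
    unfolding of_nat_add of_nat_mult of_nat_numeral int_choose_two
    by (simp add: power2_eq_square algebra_simps)
  then show ?thesis
    by (simp only: of_nat_eq_iff)
qed

lemma gauss_product_lower_half:
  "(\<Prod>t<n. fps_X ^ (2 * n - 1) + (-1) * (fps_X ^ 2) ^ t :: 'a::comm_ring_1 fps) =
    (-1) ^ n * fps_X ^ (2 * (n choose 2)) * (\<Prod>i<n. 1 - fps_X ^ (2 * i + 1))"
proof -
  have "(\<Prod>t<n. fps_X ^ (2 * n - 1) + (-1) * (fps_X ^ 2) ^ t :: 'a fps) =
      (\<Prod>r<n. fps_X ^ (2 * n - 1) + (-1) * (fps_X ^ 2) ^ (n - Suc r))"
    by (rule prod.nat_diff_reindex[symmetric])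
  also have "\<dots> = (\<Prod>r<n. - (fps_X ^ (2 * (n - Suc r))) * (1 - fps_X ^ (2 * r + 1)))"
  proof (rule prod.cong[OF refl])
    fix r
    assume "r \<in> {..<n}"
    then have "2 * (n - Suc r) + (2 * r + 1) = 2 * n - 1"
      by simp
    then have "fps_X ^ (2 * n - 1) = (fps_X ^ (2 * (n - Suc r)) * fps_X ^ (2 * r + 1) :: 'a fps)"
      by (metis power_add)
    then show "fps_X ^ (2 * n - 1) + (-1) * (fps_X ^ 2) ^ (n - Suc r) =
        - (fps_X ^ (2 * (n - Suc r))) * (1 - fps_X ^ (2 * r + 1) :: 'a fps)"
      by (simp add: algebra_simps flip: power_mult)
  qed
  also have "\<dots> = (\<Prod>r<n. - (fps_X ^ (2 * (n - Suc r)))) * (\<Prod>i<n. 1 - fps_X ^ (2 * i + 1))"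
    by (rule prod.distrib)
  also have "(\<Prod>r<n. - (fps_X ^ (2 * (n - Suc r)))) = (\<Prod>t<n. - (fps_X ^ (2 * t)) :: 'a fps)"
    by (rule prod.nat_diff_reindex)
  also have "\<dots> = (-1) ^ n * fps_X ^ (2 * (n choose 2))"
    by (induction n) (simp_all add: Suc_choose_two binomial_eq_0 power_add algebra_simps)
  finally show ?thesis .
qed

lemma gauss_product_upper_half:
  assumes "0 < n"
  shows "(\<Prod>s<n. fps_X ^ (2 * n - 1) + (-1) * (fps_X ^ 2) ^ (n + s) :: 'a::comm_ring_1 fps) =
    fps_X ^ ((2 * n - 1) * n) * (\<Prod>i<n. 1 - fps_X ^ (2 * i + 1))"
proof -
  have "(\<Prod>s<n. fps_X ^ (2 * n - 1) + (-1) * (fps_X ^ 2) ^ (n + s) :: 'a fps) =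
      (\<Prod>s<n. fps_X ^ (2 * n - 1) * (1 - fps_X ^ (2 * s + 1)))"
  proof (rule prod.cong[OF refl])
    fix s
    have "2 * (n + s) = (2 * n - 1) + (2 * s + 1)"
      using assms by simp
    then have "(fps_X ^ 2) ^ (n + s) = (fps_X ^ (2 * n - 1) * fps_X ^ (2 * s + 1) :: 'a fps)"
      by (metis power_add power_mult)
    then show "fps_X ^ (2 * n - 1) + (-1) * (fps_X ^ 2) ^ (n + s) =
        fps_X ^ (2 * n - 1) * (1 - fps_X ^ (2 * s + 1) :: 'a fps)"
      by (simp add: algebra_simps)
  qed
  also have "\<dots> = fps_X ^ ((2 * n - 1) * n) * (\<Prod>i<n. 1 - fps_X ^ (2 * i + 1))"
    by (simp add: prod.distrib power_mult)
  finally show ?thesis .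
qed

lemma finite_gauss_identity:
  assumes "0 < n"
  shows "(\<Prod>i<n. 1 - fps_X ^ (2 * i + 1) :: 'a::comm_ring_1 fps) ^ 2 =
    (\<Sum>k\<le>2 * n. (-1) ^ (k + n) * qbinomial (fps_X ^ 2) (2 * n) k * fps_X ^ (nat_dist k n ^ 2))"
proof -
  define a :: "'a fps" where "a = fps_X ^ (2 * n - 1)"
  define p :: "'a fps" where "p = fps_X ^ 2"
  define P where "P = (\<Prod>i<n. 1 - fps_X ^ (2 * i + 1) :: 'a fps)"
  define c where "c = 2 * (n choose 2) + (2 * n - 1) * n"
  have "fps_X ^ c * ((-1) ^ n * P ^ 2) =
      ((-1) ^ n * fps_X ^ (2 * (n choose 2)) * P) * (fps_X ^ ((2 * n - 1) * n) * P)"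
    by (simp only: c_def power_add power2_eq_square mult_ac)
  also have "\<dots> = (\<Prod>t<2 * n. a + (-1) * p ^ t)"
    unfolding prod_lessThan_add[where m = n and n = n, folded mult_2] a_def p_def P_def
      gauss_product_lower_half gauss_product_upper_half[OF assms] ..
  also have "\<dots> = (\<Sum>k\<le>2 * n. qbinomial p (2 * n) k * p ^ (k choose 2) * (-1) ^ k * a ^ (2 * n - k))"
    by (rule qbinomial_theorem)
  also have "\<dots> = fps_X ^ c * (\<Sum>k\<le>2 * n. (-1) ^ k * qbinomial p (2 * n) k * fps_X ^ (nat_dist k n ^ 2))"
    unfolding sum_distrib_left
  proof (rule sum.cong[OF refl])
    fix k
    assume "k \<in> {..2 * n}"
    then have exponent: "p ^ (k choose 2) * a ^ (2 * n - k) = fps_X ^ c * fps_X ^ (nat_dist k n ^ 2)"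
      using gauss_exponent_identity[OF assms, of k]
      by (simp add: p_def a_def c_def flip: power_mult power_add)
    have "qbinomial p (2 * n) k * p ^ (k choose 2) * (-1) ^ k * a ^ (2 * n - k) =
        (-1) ^ k * qbinomial p (2 * n) k * (p ^ (k choose 2) * a ^ (2 * n - k))"
      by (simp only: mult_ac)
    then show "qbinomial p (2 * n) k * p ^ (k choose 2) * (-1) ^ k * a ^ (2 * n - k) =
        fps_X ^ c * ((-1) ^ k * qbinomial p (2 * n) k * fps_X ^ (nat_dist k n ^ 2))"
      unfolding exponent by (simp only: mult_ac)
  qed
  finally have "(-1) ^ n * P ^ 2 =
      (\<Sum>k\<le>2 * n. (-1) ^ k * qbinomial p (2 * n) k * fps_X ^ (nat_dist k n ^ 2))"
    by (rule fps_X_power_mult_left_cancel)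
  then have "P ^ 2 = (-1) ^ n * (\<Sum>k\<le>2 * n. (-1) ^ k * qbinomial p (2 * n) k * fps_X ^ (nat_dist k n ^ 2))"
    by (metis (no_types, lifting) mult.assoc mult_1 neg_one_even_power even_add power_add)
  then show ?thesis
    by (simp add: P_def p_def sum_distrib_left power_add algebra_simps)
qed

(* \<Sum>m\<in>\<int>. (-1)^m X^(m^2) *)
definition gauss_series :: "int fps" where
  "gauss_series = Abs_fps (\<lambda>i. if i = 0 then 1 else 2 * (-1) ^ i * delta_s i)"

lemma fps_cutoff_gauss_series:
  "fps_cutoff n gauss_series = fps_cutoff n (1 + 2 * (\<Sum>s=1..n. (-1) ^ s * fps_X ^ (s ^ 2)))"
  unfolding fps_cutoff_eq_fps_cutoff_iff
proof (intro allI impI)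
  fix i
  assume "i < n"
  define c where "c s = (if i = s ^ 2 then (-1) ^ s else 0 :: int)" for s
  have nth: "(1 + 2 * (\<Sum>s=1..n. (-1) ^ s * fps_X ^ (s ^ 2) :: int fps)) $ i =
      (if i = 0 then 1 else 2 * (\<Sum>s=1..n. c s))"
    by (auto simp: c_def numeral_fps_const fps_sum_nth fps_X_power_nth fps_neg_one_power_mult_nth
        intro!: sum.neutral sum.cong)
  show "gauss_series $ i = (1 + 2 * (\<Sum>s=1..n. (-1) ^ s * fps_X ^ (s ^ 2))) $ i"
  proof (cases "i > 0 \<and> (\<exists>m. i = m ^ 2)")
    case True
    then obtain m where m: "i = m ^ 2" "0 < m"
      by auto
    have "m \<le> i"
      unfolding m by (simp add: power2_nat_le_imp_le)
    have "c s = (if s = m then (-1) ^ m else 0)" for s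
      unfolding c_def m by (simp add: power2_eq_iff_nonneg)
    then have "(\<Sum>s=1..n. c s) = (-1) ^ m"
      using \<open>m \<le> i\<close> \<open>i < n\<close> m(2) by simp
    moreover have "(-1 :: int) ^ i = (-1) ^ m"
      unfolding m by (simp add: minus_one_power_iff)
    ultimately show ?thesis
      unfolding nth using True by (simp add: gauss_series_def delta_s_def)
  next
    case False
    then have "i = 0 \<or> (\<forall>s. c s = 0)"
      by (auto simp: c_def)
    with False show ?thesis
      unfolding nth by (auto simp: gauss_series_def delta_s_def)
  qed
qed

lemma neg_one_power_add_eq_nat_dist: "(-1 :: 'a::ring_1) ^ (k + n) = (-1) ^ nat_dist k n"
proof -
  have "k + n = nat_dist k n + 2 * min k n"
    by (simp add: nat_dist_def)
  then show ?thesis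
    by (simp add: power_add power_mult)
qed

lemma gauss_center_sum:
  "(\<Sum>k\<le>2 * n. (-1) ^ (k + n) * fps_X ^ (nat_dist k n ^ 2) :: 'a::comm_ring_1 fps) =
    1 + 2 * (\<Sum>s=1..n. (-1) ^ s * fps_X ^ (s ^ 2))"
proof -
  define h :: "nat \<Rightarrow> 'a fps" where "h d = (-1) ^ d * fps_X ^ (d ^ 2)" for d
  have "(\<Sum>k\<le>2 * n. (-1) ^ (k + n) * fps_X ^ (nat_dist k n ^ 2) :: 'a fps) =
      (\<Sum>k\<le>2 * n. h (nat_dist k n))"
    unfolding h_def neg_one_power_add_eq_nat_dist ..
  also have "\<dots> = (\<Sum>r\<le>n. h r) + (\<Sum>s=1..n. h s)"
    unfolding sum_atMost_double_split
    by (intro arg_cong2[where f = "(+)"] sum.cong) (auto simp: nat_dist_def)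
  also have "(\<Sum>r\<le>n. h r) = h 0 + (\<Sum>s=1..n. h s)"
    by (simp add: atMost_atLeast0 sum.atLeast_Suc_atMost)
  also have "h 0 = 1"
    by (simp add: h_def)
  finally show ?thesis
    unfolding mult_2 h_def by (simp only: add.assoc)
qed

lemma fps_cutoff_gauss_series_eq_product:
  "fps_cutoff n gauss_series =
    fps_cutoff n ((\<Prod>i<n. 1 - fps_X ^ (2 * i + 1)) ^ 2 * qpochhammer (fps_X ^ 2) n)"
  (is "_ = fps_cutoff n ?P")
proof (cases "n = 0")
  case False
  then have n: "0 < n"
    by simp
  define B :: "nat \<Rightarrow> int fps"
    where "B k = qbinomial (fps_X ^ 2) (2 * n) k * qpochhammer (fps_X ^ 2) n" for k
  have "fps_cutoff n ?P =
      fps_cutoff n (\<Sum>k\<le>2 * n. (-1) ^ (k + n) * (fps_X ^ (nat_dist k n ^ 2) * B k))"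
    unfolding finite_gauss_identity[OF n] sum_distrib_right B_def by (simp only: mult_ac)
  also have "\<dots> = fps_cutoff n (\<Sum>k\<le>2 * n. (-1) ^ (k + n) * fps_X ^ (nat_dist k n ^ 2))"
  proof (intro fps_cutoff_sum_cong fps_cutoff_mult_cong refl)
    fix k
    assume "k \<in> {..2 * n}"
    moreover have "nat_dist k n \<le> nat_dist k n ^ 2 + 1"
      by (simp add: power2_eq_square le_SucI le_square)
    ultimately show "fps_cutoff n (fps_X ^ (nat_dist k n ^ 2) * B k) = fps_cutoff n (fps_X ^ (nat_dist k n ^ 2))"
      unfolding B_def by (intro fps_cutoff_X_power_mult_qbinomial_qpochhammer) auto
  qed
  also have "\<dots> = fps_cutoff n gauss_series"
    by (simp only: gauss_center_sum fps_cutoff_gauss_series)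
  finally show ?thesis ..
qed simp

definition arith_fps :: "(nat \<Rightarrow> int) \<Rightarrow> int fps" where
  "arith_fps h = Abs_fps (\<lambda>j. if j = 0 then 0 else h j)"

lemma fps_XD_gauss_series:
  "fps_XD gauss_series = - (gauss_series * arith_fps (\<lambda>j. sigma j + sigma_o j))"
proof -
  define L_odd :: "nat \<Rightarrow> int fps" where "L_odd = lambert_sum (\<lambda>i. 2 * i + 1)"
  define L_even :: "nat \<Rightarrow> int fps" where "L_even = lambert_sum (\<lambda>i. 2 * Suc i)"
  have "fps_XD gauss_series = gauss_series * - arith_fps (\<lambda>j. sigma j + sigma_o j)"
  proof (rule fps_XD_eq_mult_if_product_cutoffs)
    fix N
    show "fps_cutoff N (gauss_series * 1) =
        fps_cutoff N ((\<Prod>i<N. 1 - fps_X ^ (2 * i + 1)) ^ 2 * qpochhammer (fps_X ^ 2) N)"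
      using fps_cutoff_gauss_series_eq_product by simp
    show "fps_XD 1 = - (1 * 0 :: int fps)"
      by (simp add: fps_XD_def)
    have "fps_XD (\<Prod>i<N. 1 - fps_X ^ (2 * i + 1) :: int fps) =
        - ((\<Prod>i<N. 1 - fps_X ^ (2 * i + 1)) * L_odd N)"
      unfolding L_odd_def by (rule fps_XD_prod_one_minus_X_power) simp
    from fps_XD_mult_log[OF fps_XD_mult_log[OF this this] fps_XD_qpochhammer_X_power[of 2 N]]
    show "fps_XD ((\<Prod>i<N. 1 - fps_X ^ (2 * i + 1)) ^ 2 * qpochhammer (fps_X ^ 2) N) =
        - ((\<Prod>i<N. 1 - fps_X ^ (2 * i + 1)) ^ 2 * qpochhammer (fps_X ^ 2) N *
           (L_odd N + L_odd N + L_even N))"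
      by (simp add: L_even_def power2_eq_square)
    show "fps_cutoff N (0 - (L_odd N + L_odd N + L_even N)) =
        fps_cutoff N (- arith_fps (\<lambda>j. sigma j + sigma_o j))"
      unfolding fps_cutoff_eq_fps_cutoff_iff fps_sub_nth fps_add_nth fps_neg_nth
      using lambert_sum_odd_nth lambert_sum_multiples_nth[where 'a = int and e = 2]
        sigma_eq_sigma_o_plus_sigma_e
      by (auto simp: L_odd_def L_even_def arith_fps_def sigma_e_def)
  qed simp
  then show ?thesis
    by simp
qed

section \<open>Gauss's identity for the triangular numbers\<close>

(* The integer (k - n)(k - n - 1)/2. *)
definition psi_exponent :: "nat \<Rightarrow> nat \<Rightarrow> nat" where
  "psi_exponent n k = (if n \<le> k then (k - n) choose 2 else Suc (n - k) choose 2)"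

lemma psi_exponent_identity:
  assumes "k \<le> 2 * n"
  shows "(k choose 2) + n * (2 * n - k) = ((n choose 2) + n * n) + psi_exponent n k"
proof -
  have "2 * int (psi_exponent n k) = (int k - int n) * (int k - int n - 1)"
  proof (cases "n \<le> k")
    case True
    then show ?thesis
      using int_choose_two[of "k - n"] by (simp add: psi_exponent_def of_nat_diff)
  next
    case False
    then show ?thesis
      using int_choose_two[of "Suc (n - k)"] by (simp add: psi_exponent_def of_nat_diff algebra_simps)
  qed
  moreover have "int (2 * n - k) = 2 * int n - int k"
    using assms by simp
  ultimately have "2 * int ((k choose 2) + n * (2 * n - k)) = 2 * int ((n choose 2) + n * n + psi_exponent n k)"
    unfolding of_nat_add of_nat_mult distrib_left int_choose_two
    by (simp add: algebra_simps)
  then show ?thesis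
    by (simp only: mult_cancel_left of_nat_eq_iff) simp
qed

lemma psi_product_lower_half:
  "(\<Prod>t<n. fps_X ^ n + fps_X ^ t :: 'a::comm_ring_1 fps) = fps_X ^ (n choose 2) * neg_qpochhammer fps_X n"
proof -
  have "(\<Prod>t<n. fps_X ^ n + fps_X ^ t :: 'a fps) = (\<Prod>r<n. fps_X ^ n + fps_X ^ (n - Suc r))"
    by (rule prod.nat_diff_reindex[symmetric])
  also have "\<dots> = (\<Prod>r<n. fps_X ^ (n - Suc r) * (1 + fps_X ^ Suc r))"
  proof (rule prod.cong[OF refl])
    fix r
    assume "r \<in> {..<n}"
    then have "n - Suc r + Suc r = n"
      by simp
    then have "fps_X ^ n = (fps_X ^ (n - Suc r) * fps_X ^ Suc r :: 'a fps)"
      by (metis power_add)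
    then show "fps_X ^ n + fps_X ^ (n - Suc r) = fps_X ^ (n - Suc r) * (1 + fps_X ^ Suc r :: 'a fps)"
      by (simp add: algebra_simps)
  qed
  also have "\<dots> = (\<Prod>r<n. fps_X ^ (n - Suc r)) * neg_qpochhammer fps_X n"
    unfolding neg_qpochhammer_def by (rule prod.distrib)
  also have "(\<Prod>r<n. fps_X ^ (n - Suc r)) = (\<Prod>t<n. fps_X ^ t :: 'a fps)"
    by (rule prod.nat_diff_reindex)
  also have "\<dots> = fps_X ^ (n choose 2)"
    by (induction n) (simp_all add: Suc_choose_two binomial_eq_0 power_add)
  finally show ?thesis .
qed

lemma psi_product_upper_half:
  "(\<Prod>s<n. fps_X ^ n + fps_X ^ (n + s) :: 'a::comm_ring_1 fps) = fps_X ^ (n * n) * (\<Prod>s<n. 1 + fps_X ^ s)"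
proof -
  have "(\<Prod>s<n. fps_X ^ n + fps_X ^ (n + s) :: 'a fps) = (\<Prod>s<n. fps_X ^ n * (1 + fps_X ^ s))"
    by (rule prod.cong) (simp_all add: power_add algebra_simps)
  also have "\<dots> = fps_X ^ (n * n) * (\<Prod>s<n. 1 + fps_X ^ s)"
    by (simp add: prod.distrib power_mult)
  finally show ?thesis .
qed

lemma finite_psi_identity:
  "neg_qpochhammer fps_X n * (\<Prod>s<n. 1 + fps_X ^ s) =
    (\<Sum>k\<le>2 * n. qbinomial fps_X (2 * n) k * fps_X ^ psi_exponent n k :: 'a::comm_ring_1 fps)"
proof -
  define a :: "'a fps" where "a = fps_X ^ n"
  define c where "c = (n choose 2) + n * n"
  have "fps_X ^ c * (neg_qpochhammer fps_X n * (\<Prod>s<n. 1 + fps_X ^ s)) =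
      (fps_X ^ (n choose 2) * neg_qpochhammer fps_X n) * (fps_X ^ (n * n) * (\<Prod>s<n. 1 + fps_X ^ s))"
    by (simp only: c_def power_add mult_ac)
  also have "\<dots> = (\<Prod>t<2 * n. a + 1 * fps_X ^ t)"
    unfolding mult_1 prod_lessThan_add[where m = n and n = n, folded mult_2] a_def
      psi_product_lower_half psi_product_upper_half ..
  also have "\<dots> = (\<Sum>k\<le>2 * n. qbinomial fps_X (2 * n) k * fps_X ^ (k choose 2) * 1 ^ k * a ^ (2 * n - k))"
    by (rule qbinomial_theorem)
  also have "\<dots> = fps_X ^ c * (\<Sum>k\<le>2 * n. qbinomial fps_X (2 * n) k * fps_X ^ psi_exponent n k)"
    unfolding sum_distrib_left
  proof (rule sum.cong[OF refl])
    fix k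
    assume "k \<in> {..2 * n}"
    then have exponent: "fps_X ^ (k choose 2) * a ^ (2 * n - k) = fps_X ^ c * (fps_X ^ psi_exponent n k :: 'a fps)"
      using psi_exponent_identity[of k n]
      by (simp add: a_def c_def flip: power_mult power_add)
    show "qbinomial fps_X (2 * n) k * fps_X ^ (k choose 2) * 1 ^ k * a ^ (2 * n - k) =
        fps_X ^ c * (qbinomial fps_X (2 * n) k * fps_X ^ psi_exponent n k)"
      using exponent by (simp add: mult.assoc mult.left_commute)
  qed
  finally show ?thesis
    by (rule fps_X_power_mult_left_cancel)
qed

definition psi_series :: "int fps" where
  "psi_series = Abs_fps delta_t"

lemma strict_mono_Suc_choose_two: "strict_mono (\<lambda>r. Suc r choose 2)"
  unfolding strict_mono_Suc_iff by (simp add: Suc_choose_two)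

lemma delta_t_iff: "delta_t i = (if \<exists>m. i = Suc m choose 2 then 1 else 0)"
proof -
  have "m * (m + 1) div 2 = Suc m choose 2" for m
    by (simp add: choose_two mult.commute)
  then show ?thesis
    by (simp add: delta_t_def)
qed

lemma fps_cutoff_psi_series:
  assumes "n \<le> N"
  shows "fps_cutoff n psi_series = fps_cutoff n (\<Sum>r<N. fps_X ^ (Suc r choose 2))"
  unfolding fps_cutoff_eq_fps_cutoff_iff
proof (intro allI impI)
  fix i
  assume "i < n"
  have nth: "(\<Sum>r<N. fps_X ^ (Suc r choose 2) :: int fps) $ i = (\<Sum>r<N. if i = Suc r choose 2 then 1 else 0)"
    by (simp add: fps_sum_nth fps_X_power_nth)
  show "psi_series $ i = (\<Sum>r<N. fps_X ^ (Suc r choose 2)) $ i"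
  proof (cases "\<exists>m. i = Suc m choose 2")
    case True
    then obtain m where m: "i = Suc m choose 2"
      by blast
    then have "m < N"
      using \<open>i < n\<close> assms by (simp add: Suc_choose_two)
    have "i = Suc r choose 2 \<longleftrightarrow> r = m" for r
      unfolding m using strict_mono_eq[OF strict_mono_Suc_choose_two, of m r] by auto
    then have "(\<Sum>r<N. if i = Suc r choose 2 then 1 else 0) = (\<Sum>r<N. if r = m then 1 else 0 :: int)"
      by presburger
    with True \<open>m < N\<close> show ?thesis
      unfolding nth by (simp add: psi_series_def delta_t_iff)
  next
    case False
    then show ?thesis
      unfolding nth by (simp add: psi_series_def delta_t_iff)
  qed
qed

lemma psi_center_sum:
  "(\<Sum>k\<le>2 * n. fps_X ^ psi_exponent n k :: 'a::comm_ring_1 fps) =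
    (\<Sum>r\<le>n. fps_X ^ (Suc r choose 2)) + (\<Sum>r<n. fps_X ^ (Suc r choose 2))"
proof -
  have "(\<Sum>k\<le>2 * n. fps_X ^ psi_exponent n k :: 'a fps) =
      (\<Sum>r\<le>n. fps_X ^ (Suc r choose 2)) + (\<Sum>s=1..n. fps_X ^ (s choose 2))"
    unfolding sum_atMost_double_split
  proof (intro arg_cong2[where f = "(+)"] sum.cong refl)
    fix r
    assume "r \<in> {..n}"
    then show "fps_X ^ psi_exponent n (n - r) = (fps_X ^ (Suc r choose 2) :: 'a fps)"
      by (cases r) (auto simp: psi_exponent_def binomial_eq_0)
  qed (simp add: psi_exponent_def)
  then show ?thesis
    by (simp add: sum.atLeast1_atMost_eq)
qed

lemma fps_cutoff_two_psi_series:
  "fps_cutoff n (2 * psi_series) =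
    fps_cutoff n (neg_qpochhammer fps_X n * (\<Prod>s<n. 1 + fps_X ^ s) * qpochhammer fps_X n)"
proof -
  define B :: "nat \<Rightarrow> int fps"
    where "B k = qbinomial (fps_X ^ 1) (2 * n) k * qpochhammer (fps_X ^ 1) n" for k
  have "fps_cutoff n (neg_qpochhammer fps_X n * (\<Prod>s<n. 1 + fps_X ^ s) * qpochhammer fps_X n) =
      fps_cutoff n (\<Sum>k\<le>2 * n. fps_X ^ psi_exponent n k * B k)"
    unfolding finite_psi_identity sum_distrib_right B_def by (simp only: power_one_right mult_ac)
  also have "\<dots> = fps_cutoff n (\<Sum>k\<le>2 * n. fps_X ^ psi_exponent n k)"
  proof (intro fps_cutoff_sum_cong)
    fix k
    assume "k \<in> {..2 * n}"
    moreover have "d \<le> (d choose 2) + 1" for d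
      by (cases d) (simp_all add: Suc_choose_two)
    then have "nat_dist k n \<le> psi_exponent n k + 1"
      by (auto simp: nat_dist_def psi_exponent_def Suc_choose_two)
    ultimately show "fps_cutoff n (fps_X ^ psi_exponent n k * B k) = fps_cutoff n (fps_X ^ psi_exponent n k)"
      unfolding B_def by (intro fps_cutoff_X_power_mult_qbinomial_qpochhammer) auto
  qed
  also have "\<dots> = fps_cutoff n psi_series + fps_cutoff n psi_series"
    unfolding psi_center_sum fps_cutoff_add
    using fps_cutoff_psi_series[of n "Suc n"] fps_cutoff_psi_series[of n n]
    by (simp add: lessThan_Suc_atMost)
  finally show ?thesis
    unfolding mult_2 fps_cutoff_add by (rule sym)
qed

lemma fps_cutoff_psi_series_mult_qpochhammer:
  "fps_cutoff n (psi_series * qpochhammer fps_X n) = fps_cutoff n (qpochhammer (fps_X ^ 2) n ^ 2)"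
proof (cases n)
  case (Suc m)
  define A where "A = neg_qpochhammer (fps_X :: int fps)"
  define Q where "Q = qpochhammer (fps_X :: int fps) n"
  have "(\<Prod>s<n. 1 + fps_X ^ s :: int fps) = 2 * A m"
    unfolding Suc prod.lessThan_Suc_shift by (simp add: A_def neg_qpochhammer_def)
  with fps_cutoff_two_psi_series[of n]
  have "fps_cutoff n (2 * psi_series) = fps_cutoff n (A n * (2 * A m) * Q)"
    by (simp add: A_def Q_def)
  then have "fps_cutoff n (2 * psi_series * Q) = fps_cutoff n (A n * (2 * A m) * Q * Q)"
    by (rule fps_cutoff_mult_cong) (rule refl)
  also have "fps_cutoff n (A m) = fps_cutoff n (A n)"
  proof -
    have "fps_cutoff n (A m * 1) = fps_cutoff n (A m * (1 + fps_X ^ n))"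
      by (intro fps_cutoff_mult_cong) (simp_all add: fps_cutoff_eq_fps_cutoff_iff)
    then show ?thesis
      by (simp add: Suc A_def neg_qpochhammer_def)
  qed
  then have "fps_cutoff n (A n * (2 * A m) * Q * Q) = fps_cutoff n (A n * (2 * A n) * Q * Q)"
    by (intro fps_cutoff_mult_cong refl)
  also have "A n * (2 * A n) * Q * Q = 2 * qpochhammer (fps_X ^ 2) n ^ 2"
    unfolding A_def Q_def neg_qpochhammer_mult_qpochhammer[symmetric] by (simp only: power2_eq_square mult_ac)
  finally have "fps_cutoff n (2 * (psi_series * Q)) = fps_cutoff n (2 * qpochhammer (fps_X ^ 2) n ^ 2)"
    by (simp only: mult.assoc)
  then show ?thesis
    unfolding Q_def by (rule fps_cutoff_double_cancel)
qed simp

lemma fps_XD_psi_series: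
  "fps_XD psi_series = psi_series * arith_fps (\<lambda>j. sigma_o j - sigma_e j)"
proof (rule fps_XD_eq_mult_if_product_cutoffs)
  fix N
  show "fps_cutoff N (psi_series * qpochhammer fps_X N) = fps_cutoff N (qpochhammer (fps_X ^ 2) N ^ 2)"
    by (rule fps_cutoff_psi_series_mult_qpochhammer)
  show "fps_XD (qpochhammer fps_X N) = - (qpochhammer fps_X N * lambert_sum Suc N :: int fps)"
    using fps_XD_qpochhammer_X_power[of 1 N] by simp
  show "qpochhammer (fps_X :: int fps) N $ 0 = 1"
    using qpochhammer_X_power_nth_0[of 1] by simp
  have "fps_XD (qpochhammer (fps_X ^ 2) N :: int fps) =
      - (qpochhammer (fps_X ^ 2) N * lambert_sum (\<lambda>i. 2 * Suc i) N)"
    by (rule fps_XD_qpochhammer_X_power) simp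
  from fps_XD_mult_log[OF this this]
  show "fps_XD (qpochhammer (fps_X ^ 2) N ^ 2) =
      - (qpochhammer (fps_X ^ 2) N ^ 2 * (lambert_sum (\<lambda>i. 2 * Suc i) N + lambert_sum (\<lambda>i. 2 * Suc i) N)
        :: int fps)"
    by (simp only: power2_eq_square)
  show "fps_cutoff N (lambert_sum Suc N - (lambert_sum (\<lambda>i. 2 * Suc i) N + lambert_sum (\<lambda>i. 2 * Suc i) N)) =
      fps_cutoff N (arith_fps (\<lambda>j. sigma_o j - sigma_e j))"
    unfolding fps_cutoff_eq_fps_cutoff_iff fps_sub_nth fps_add_nth
    using lambert_sum_multiples_nth[where 'a = int and e = 1] lambert_sum_multiples_nth[where 'a = int and e = 2]
      sigma_eq_sigma_o_plus_sigma_e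
    by (auto simp: arith_fps_def sigma_def sigma_e_def)
qed

lemma sigma_sigma_o_square_recurrence:
  assumes "1 \<le> n"
  shows "sigma n + sigma_o n
    + 2 * (\<Sum>k=1..n-1. (-1) ^ k * delta_s k * (sigma (n - k) + sigma_o (n - k)))
    = 2 * (-1) ^ (n + 1) * int n * delta_s n"
proof -
  define F where "F = arith_fps (\<lambda>j. sigma j + sigma_o j)"
  obtain m where m: "n = Suc m"
    using assms by (cases n) auto
  have "(gauss_series * F) $ n = (\<Sum>k=0..m. gauss_series $ k * F $ (n - k))"
    unfolding fps_mult_nth m sum.atLeast0_atMost_Suc by (simp add: F_def arith_fps_def)
  also have "\<dots> = F $ n + (\<Sum>k=1..m. gauss_series $ k * F $ (n - k))"
    by (simp add: sum.atLeast_Suc_atMost gauss_series_def)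
  also have "(\<Sum>k=1..m. gauss_series $ k * F $ (n - k)) =
      2 * (\<Sum>k=1..m. (-1) ^ k * delta_s k * (sigma (n - k) + sigma_o (n - k)))"
    unfolding sum_distrib_left by (rule sum.cong) (auto simp: gauss_series_def F_def arith_fps_def m)
  finally have "(gauss_series * F) $ n = sigma n + sigma_o n
      + 2 * (\<Sum>k=1..m. (-1) ^ k * delta_s k * (sigma (n - k) + sigma_o (n - k)))"
    using assms by (simp add: F_def arith_fps_def)
  moreover have "(gauss_series * F) $ n = - (int n * gauss_series $ n)"
    using arg_cong[OF fps_XD_gauss_series, of "\<lambda>f. f $ n"] by (simp add: F_def)
  ultimately show ?thesis
    using m by (simp add: gauss_series_def algebra_simps)
qed

lemma sigma_o_sigma_e_triangular_convolution:
  "(\<Sum>k=1..n. (sigma_o k - sigma_e k) * delta_t (n - k)) = int n * delta_t n"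
proof -
  define K where "K = arith_fps (\<lambda>j. sigma_o j - sigma_e j)"
  have "int n * delta_t n = (K * psi_series) $ n"
    using arg_cong[OF fps_XD_psi_series, of "\<lambda>f. f $ n"]
    by (simp add: K_def psi_series_def mult.commute)
  also have "\<dots> = (\<Sum>k=0..n. K $ k * psi_series $ (n - k))"
    by (rule fps_mult_nth)
  also have "\<dots> = (\<Sum>k=1..n. (sigma_o k - sigma_e k) * delta_t (n - k))"
    by (simp add: sum.atLeast_Suc_atMost K_def arith_fps_def psi_series_def)
  finally show ?thesis ..
qed

lemma sigma_sigma_s_square_recurrence:
  assumes "1 \<le> n"
  shows "sigma n + sigma_s n
    + 2 * (\<Sum>k=1..n-1. (-1) ^ k * delta_s k * (sigma (n - k) + sigma_s (n - k)))
    = 2 * (-1) ^ (n + 1) * int n * delta_s n"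
proof -
  have "(\<Sum>k=1..n-1. (-1) ^ k * delta_s k * (sigma (n - k) + sigma_s (n - k))) =
      (\<Sum>k=1..n-1. (-1) ^ k * delta_s k * (sigma (n - k) + sigma_o (n - k)))"
    by (rule sum.cong) (auto simp: sigma_s_eq_sigma_o)
  with sigma_sigma_o_square_recurrence[of n] assms show ?thesis
    by (simp add: sigma_s_eq_sigma_o)
qed

theorem theorem5:
  shows "(\<forall>n::nat. n \<ge> 1 \<longrightarrow>
           sigma n + sigma_o n
           + 2 * (\<Sum>k=1..n-1. (-1) ^ k * delta_s k * (sigma (n - k) + sigma_o (n - k)))
           = 2 * (-1) ^ (n + 1) * int n * delta_s n)
       \<and> (\<forall>n::nat. n \<ge> 1 \<longrightarrow>
           (\<Sum>k=1..n. (sigma_o k - sigma_e k) * delta_t (n - k)) = int n * delta_t n)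
       \<and> (\<forall>n::nat. n \<ge> 2 \<longrightarrow>
           sigma n + sigma_s n
           + 2 * (\<Sum>k=1..n-1. (-1) ^ k * delta_s k * (sigma (n - k) + sigma_s (n - k)))
           = 2 * (-1) ^ (n + 1) * int n * delta_s n)"
  using sigma_sigma_o_square_recurrence sigma_o_sigma_e_triangular_convolution
    sigma_sigma_s_square_recurrence
  by auto

end
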